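(* For any finite alphabet $\mathfrak{G}$, the initial path series of $(\mathbf{S}_\bullet(\mathfrak{G}), \mathbf{U})$ satisfies $\langle t^d, \mathbf{I}_\mathbf{U}\rangle = \sum_{n\in[1+(m_\mathfrak{G}-1)d]} \theta(d,n)$ for any $d\geq 0$, where $\theta(d,n)$ satisfies the recurrence $\theta(d,n)=0$ for any $n\leq 0$ and $d\in\mathbb{Z}$, $\theta(0,1)=1$, and $\theta(d,n) = \sum_{\mathtt{a}\in\mathfrak{G},\, |\mathtt{a}|\leq n} (n+1-|\mathtt{a}|)\,\theta(d-1, n+1-|\mathtt{a}|)$ for any $d\geq 1$ and $n\geq 1$.
   Context: $\mathfrak{G}$ is a finite alphabet (letters with arities $\geq 1$), and $m_\mathfrak{G}$ is the maximal arity of a letter of $\mathfrak{G}$. A $\mathfrak{G}$-tree is either the leaf (the tree with no internal node) or a root decorated by a letter $\mathtt{a}\in\mathfrak{G}$ with $|\mathtt{a}|$ children that are $\mathfrak{G}$-trees; its degree is its number of internal nodes and its arity $|\mathfrak{t}|$ its number of leaves. $\mathbf{S}_\bullet(\mathfrak{G})$ is the set of $\mathfrak{G}$-trees graded by degree. $\mathbf{U}(\mathfrak{t}) = \sum_{\mathtt{a}\in\mathfrak{G},\, i\in[|\mathfrak{t}|]} \mathfrak{t}\circ_i\mathtt{a}$, where $\mathfrak{t}\circ_i\mathtt{a}$ replaces the $i$-th leaf of $\mathfrak{t}$ by an internal node decorated by $\mathtt{a}$ with only leaves as children; this graded graph has the leaf as root. The initial path series is $\mathbf{I}_\mathbf{U}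 = \sum_{\mathfrak{t}} \langle\mathfrak{t},\mathbf{H}_\mathbf{U}\rangle\, t^{\deg(\mathfrak{t})}$, where $\langle\mathfrak{t},\mathbf{H}_\mathbf{U}\rangle$ is the number of paths from the leaf to $\mathfrak{t}$ in this graph; so $\langle t^d,\mathbf{I}_\mathbf{U}\rangle$ is the number of paths of length $d$ starting at the leaf. (In the proof, $\theta(d,n)$ is the number of such paths ending at trees of degree $d$ and arity $n$.) *)

theory Defs
  imports Main
begin

text \<open>An alphabet is a finite set G of letters together with an arity function ar
  (arities \<ge> 1). G-trees: a leaf, or a node decorated by a letter with a list of children.\<close>

datatype 'a tree = Leaf | Node 'a "'a tree list"

fun leaves :: "'a tree \<Rightarrow> nat" where
  "leaves Leaf = 1"
| "leaves (Node a ts) = sum_list (map leaves ts)"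

fun degree :: "'a tree \<Rightarrow> nat" where
  "degree Leaf = 0"
| "degree (Node a ts) = Suc (sum_list (map degree ts))"

fun wf_tree :: "'a set \<Rightarrow> ('a \<Rightarrow> nat) \<Rightarrow> 'a tree \<Rightarrow> bool" where
  "wf_tree G ar Leaf = True"
| "wf_tree G ar (Node a ts) = (a \<in> G \<and> length ts = ar a \<and> (\<forall>t\<in>set ts. wf_tree G ar t))"

definition corolla :: "('a \<Rightarrow> nat) \<Rightarrow> 'a \<Rightarrow> 'a tree" where
  "corolla ar a = Node a (replicate (ar a) Leaf)"

text \<open>graft s i t replaces the i-th leaf of t (leaves numbered 0,1,... from left to right)
  by s. Thus graft (corolla ar a) i t is t \<circ>_(i+1) a.\<close>
fun graft :: "'a tree \<Rightarrow> nat \<Rightarrow> 'a tree \<Rightarrow> 'a tree"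
and graft_list :: "'a tree \<Rightarrow> nat \<Rightarrow> 'a tree list \<Rightarrow> 'a tree list" where
  "graft s i Leaf = (if i = 0 then s else Leaf)"
| "graft s i (Node a ts) = Node a (graft_list s i ts)"
| "graft_list s i [] = []"
| "graft_list s i (t # ts) =
     (if i < leaves t then graft s i t # ts else t # graft_list s (i - leaves t) ts)"

text \<open>A path in the graded graph U starting at the leaf is a sequence of edges; an edge out of
  t is a choice of a letter a \<in> G and a leaf position i of t (the target being t \<circ>_i a).
  Edges are counted with multiplicity, as U(t) is a formal sum. We encode a path by the list of
  choices (a, i).\<close>
definition path_end :: "('a \<Rightarrow> nat) \<Rightarrow> ('a \<times> nat) list \<Rightarrow> 'a tree" where
  "path_end ar cs = foldl (\<lambda>t (a, i). graft (corolla ar a) i t) Leaf cs"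

definition valid_path :: "'a set \<Rightarrow> ('a \<Rightarrow> nat) \<Rightarrow> ('a \<times> nat) list \<Rightarrow> bool" where
  "valid_path G ar cs =
     (\<forall>k < length cs. fst (cs ! k) \<in> G \<and> snd (cs ! k) < leaves (path_end ar (take k cs)))"

text \<open>Coefficient of t^d in the initial path series I_U: number of paths of length d from the leaf.\<close>
definition init_path_coeff :: "'a set \<Rightarrow> ('a \<Rightarrow> nat) \<Rightarrow> nat \<Rightarrow> nat" where
  "init_path_coeff G ar d = card {cs. length cs = d \<and> valid_path G ar cs}"

definition max_arity :: "'a set \<Rightarrow> ('a \<Rightarrow> nat) \<Rightarrow> nat" where
  "max_arity G ar = (if G = {} then 0 else Max (ar ` G))"

text \<open>theta d n, defined by the recurrence; n is a natural number, theta d 0 = 0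
  (the values for n \<le> 0 are 0).\<close>
fun theta :: "'a set \<Rightarrow> ('a \<Rightarrow> nat) \<Rightarrow> nat \<Rightarrow> nat \<Rightarrow> nat" where
  "theta G ar 0 n = (if n = 1 then 1 else 0)"
| "theta G ar (Suc d) n =
     (if n = 0 then 0
      else (\<Sum>a \<in> {a \<in> G. ar a \<le> n}. (n + 1 - ar a) * theta G ar d (n + 1 - ar a)))"

end

theory Submission
  imports Defs
begin

text \<open>Sort the paths of length \<open>d\<close> by the arity \<open>n\<close> of the tree they end at. Such a path is
  a path of length \<open>d - 1\<close> followed by one grafting of a letter \<open>a\<close>, which turns a tree of
  arity \<open>n + 1 - |a|\<close> into one of arity \<open>n\<close> and can be done at any of its \<open>n + 1 - |a|\<close> leaves.
  Hence the number of paths ending at arity \<open>n\<close> satisfies the recurrence of \<open>theta\<close>, and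
  summing over the possible arities \<open>1, \<dots>, 1 + (m - 1) d\<close> gives the theorem.\<close>

lemma leaves_graft:
  "i < leaves t \<Longrightarrow> leaves (graft s i t) = leaves t + leaves s - 1"
  "i < sum_list (map leaves ts) \<Longrightarrow>
     sum_list (map leaves (graft_list s i ts)) = sum_list (map leaves ts) + leaves s - 1"
  by (induction s i t and s i ts rule: graft_graft_list.induct) auto

lemma leaves_corolla [simp]: "leaves (corolla ar a) = ar a"
  by (simp add: corolla_def sum_list_replicate)

lemma path_end_Nil [simp]: "path_end ar [] = Leaf"
  by (simp add: path_end_def)

lemma path_end_snoc: "path_end ar (cs @ [(a, i)]) = graft (corolla ar a) i (path_end ar cs)"
  by (simp add: path_end_def)

lemma valid_path_Nil [simp]: "valid_path G ar []"
  by (simp add: valid_path_def)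

lemma valid_path_snoc:
  "valid_path G ar (cs @ [(a, i)]) \<longleftrightarrow>
     valid_path G ar cs \<and> a \<in> G \<and> i < leaves (path_end ar cs)"
  by (auto simp: valid_path_def nth_append less_Suc_eq)

lemma leaves_path_end_snoc:
  "i < leaves (path_end ar cs) \<Longrightarrow>
     leaves (path_end ar (cs @ [(a, i)])) = leaves (path_end ar cs) + ar a - 1"
  by (simp add: path_end_snoc leaves_graft)

lemma leaves_path_end_pos:
  assumes "\<forall>a \<in> G. ar a \<ge> 1" and "valid_path G ar cs"
  shows "leaves (path_end ar cs) \<ge> 1"
  using assms(2)
proof (induction cs rule: rev_induct)
  case Nil
  then show ?case by simp
next
  case (snoc c cs)
  obtain a i where "c = (a, i)" by force
  with snoc assms(1) show ?case
    by (auto simp: valid_path_snoc leaves_path_end_snoc)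
qed

lemma leaves_path_end_le:
  assumes "finite G" and "valid_path G ar cs"
  shows "leaves (path_end ar cs) \<le> 1 + (max_arity G ar - 1) * length cs"
  using assms(2)
proof (induction cs rule: rev_induct)
  case Nil
  then show ?case by simp
next
  case (snoc c cs)
  obtain a i where c: "c = (a, i)" by force
  with snoc.prems have valid: "valid_path G ar cs" "a \<in> G" "i < leaves (path_end ar cs)"
    by (auto simp: valid_path_snoc)
  have "ar a \<le> max_arity G ar"
    using valid(2) assms(1) by (auto simp: max_arity_def)
  moreover have "leaves (path_end ar (cs @ [c])) = leaves (path_end ar cs) + ar a - 1"
    using valid(3) by (simp add: c leaves_path_end_snoc)
  ultimately show ?case
    using snoc.IH[OF valid(1)] by simp
qed

definition paths_of_arity :: "'a set \<Rightarrow> ('a \<Rightarrow> nat) \<Rightarrow> nat \<Rightarrow> nat \<Rightarrow> ('a \<times> nat) list set" where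
  "paths_of_arity G ar d n =
     {cs. length cs = d \<and> valid_path G ar cs \<and> leaves (path_end ar cs) = n}"

lemma paths_of_arity_0: "paths_of_arity G ar 0 n = (if n = 1 then {[]} else {})"
  by (auto simp: paths_of_arity_def)

lemma paths_of_arity_Suc:
  assumes "\<forall>a \<in> G. ar a \<ge> 1"
  shows "paths_of_arity G ar (Suc d) n =
    (\<Union>a \<in> {a \<in> G. ar a \<le> n}. (\<lambda>(cs, i). cs @ [(a, i)]) `
       (paths_of_arity G ar d (n + 1 - ar a) \<times> {..<n + 1 - ar a}))"
    (is "?L = ?R")
proof
  show "?L \<subseteq> ?R"
  proof
    fix xs
    assume xs: "xs \<in> ?L"
    then have "length xs = Suc d"
      by (simp add: paths_of_arity_def)
    then obtain cs a i where xs_eq: "xs = cs @ [(a, i)]"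
      by (metis length_Suc_conv_rev prod.exhaust)
    let ?m = "leaves (path_end ar cs)"
    from xs have valid: "valid_path G ar cs" "a \<in> G" "i < ?m" and "length cs = d"
      and "?m + ar a - 1 = n"
      by (auto simp: paths_of_arity_def xs_eq valid_path_snoc leaves_path_end_snoc)
    moreover from assms valid(2) have "ar a \<ge> 1"
      by auto
    ultimately have "ar a \<le> n" and "?m = n + 1 - ar a"
      by linarith+
    with valid \<open>length cs = d\<close>
    have "(cs, i) \<in> paths_of_arity G ar d (n + 1 - ar a) \<times> {..<n + 1 - ar a}"
      by (simp add: paths_of_arity_def)
    with valid(2) \<open>ar a \<le> n\<close> show "xs \<in> ?R"
      unfolding xs_eq by (intro UN_I[of a] image_eqI[of _ _ "(cs, i)"]) simp_all
  qed
next
  show "?R \<subseteq> ?L"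
  proof
    fix xs
    assume "xs \<in> ?R"
    then obtain a cs i where "a \<in> G" "ar a \<le> n" "cs \<in> paths_of_arity G ar d (n + 1 - ar a)"
      and "i < n + 1 - ar a" and "xs = cs @ [(a, i)]"
      by auto
    moreover from assms \<open>a \<in> G\<close> have "ar a \<ge> 1" by auto
    ultimately show "xs \<in> ?L"
      by (auto simp: paths_of_arity_def valid_path_snoc leaves_path_end_snoc)
  qed
qed

lemma finite_paths_of_arity:
  assumes "finite G" and "\<forall>a \<in> G. ar a \<ge> 1"
  shows "finite (paths_of_arity G ar d n)"
proof (induction d arbitrary: n)
  case 0
  then show ?case by (simp add: paths_of_arity_0)
next
  case (Suc d)
  then show ?case
    by (simp add: paths_of_arity_Suc[OF assms(2)] assms(1))
qed

lemma card_paths_of_arity: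
  assumes "finite G" and "\<forall>a \<in> G. ar a \<ge> 1"
  shows "card (paths_of_arity G ar d n) = theta G ar d n"
proof (induction d arbitrary: n)
  case 0
  then show ?case by (simp add: paths_of_arity_0)
next
  case (Suc d)
  define A where "A = {a \<in> G. ar a \<le> n}"
  define ext :: "'a \<Rightarrow> ('a \<times> nat) list \<times> nat \<Rightarrow> ('a \<times> nat) list"
    where "ext a = (\<lambda>(cs, i). cs @ [(a, i)])" for a
  define P where "P a = ext a ` (paths_of_arity G ar d (n + 1 - ar a) \<times> {..<n + 1 - ar a})" for a
  have "card (paths_of_arity G ar (Suc d) n) = card (\<Union>a \<in> A. P a)"
    by (simp add: paths_of_arity_Suc[OF assms(2)] A_def P_def ext_def)
  also have "\<dots> = (\<Sum>a \<in> A. card (P a))"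
  proof (rule card_UN_disjoint)
    show "finite A"
      using assms(1) by (simp add: A_def)
    show "\<forall>a \<in> A. finite (P a)"
      by (simp add: P_def finite_paths_of_arity[OF assms])
    show "\<forall>a \<in> A. \<forall>b \<in> A. a \<noteq> b \<longrightarrow> P a \<inter> P b = {}"
      by (auto simp: P_def ext_def)
  qed
  also have "\<dots> = (\<Sum>a \<in> A. (n + 1 - ar a) * theta G ar d (n + 1 - ar a))"
  proof (rule sum.cong)
    fix a
    have "inj (ext a)"
      by (auto simp: inj_on_def ext_def)
    then show "card (P a) = (n + 1 - ar a) * theta G ar d (n + 1 - ar a)"
      by (simp add: P_def card_image inj_on_subset card_cartesian_product Suc.IH)
  qed simp
  also have "\<dots> = theta G ar (Suc d) n"
  proof (cases "n = 0")
    case True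
    with assms(2) have "A = {}"
      by (force simp: A_def)
    with True show ?thesis
      by simp
  qed (simp add: A_def)
  finally show ?case .
qed

lemma valid_paths_eq_UN_paths_of_arity:
  assumes "finite G" and "\<forall>a \<in> G. ar a \<ge> 1"
  shows "{cs. length cs = d \<and> valid_path G ar cs} =
    (\<Union>n \<in> {1..1 + (max_arity G ar - 1) * d}. paths_of_arity G ar d n)"
  using leaves_path_end_pos[OF assms(2)] leaves_path_end_le[OF assms(1)]
  by (fastforce simp: paths_of_arity_def)

theorem proposition2p3:
  fixes G :: "'a set" and ar :: "'a \<Rightarrow> nat" and d :: nat
  assumes "finite G"
    and "\<forall>a \<in> G. ar a \<ge> 1"
  shows "init_path_coeff G ar d = (\<Sum>n = 1..1 + (max_arity G ar - 1) * d. theta G ar d n)"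
proof -
  let ?I = "{1..1 + (max_arity G ar - 1) * d}"
  have "init_path_coeff G ar d = card (\<Union>n \<in> ?I. paths_of_arity G ar d n)"
    by (simp add: init_path_coeff_def valid_paths_eq_UN_paths_of_arity[OF assms])
  also have "\<dots> = (\<Sum>n \<in> ?I. card (paths_of_arity G ar d n))"
    by (rule card_UN_disjoint)
      (auto simp: finite_paths_of_arity[OF assms], auto simp: paths_of_arity_def)
  also have "\<dots> = (\<Sum>n \<in> ?I. theta G ar d n)"
    by (simp add: card_paths_of_arity[OF assms])
  finally show ?thesis .
qed

end
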